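(* Let $s\ge 1$ and let $P^{(1)},\dots,P^{(s)}\in\mathbb{C}[z_1,\dots,z_d]$ be nonzero polynomials of total degrees $n_1,\dots,n_s$ respectively. Then \[ (n_1+\cdots+n_s)!\,\bigl\|P^{(1)}\cdots P^{(s)}\bigr\|_a^2\;\ge\;\bigl\|P^{(1)}\bigr\|_a^2\cdots\bigl\|P^{(s)}\bigr\|_a^2 . \]
   Context: For multi-indices $\alpha=(\alpha_1,\dots,\alpha_d)\in\mathbb{N}^d$ write $z^\alpha=z_1^{\alpha_1}\cdots z_d^{\alpha_d}$, $\alpha!=\alpha_1!\cdots\alpha_d!$, $|\alpha|=\alpha_1+\cdots+\alpha_d$. The apolar inner product on $\mathbb{C}[z_1,\dots,z_d]$ is defined, for $P=\sum_\alpha c_\alpha z^\alpha$ and $Q=\sum_\alpha d_\alpha z^\alpha$, by $\langle P,Q\rangle_a=\sum_{\alpha\in\mathbb{N}^d}\alpha!\,c_\alpha\overline{d_\alpha}$, and $\|P\|_a=\sqrt{\langle P,P\rangle_a}$. The total degree of $P$ is the largest $|\alpha|$ with $c_\alpha\neq0$. *)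

theory Defs
  imports "HOL-Analysis.Analysis" "HOL-Library.Poly_Mapping"
begin

type_synonym 'v mpoly = "('v \<Rightarrow>\<^sub>0 nat) \<Rightarrow>\<^sub>0 complex"

definition mi_fact :: "('v \<Rightarrow>\<^sub>0 nat) \<Rightarrow> nat" where
  "mi_fact \<alpha> = (\<Prod>v\<in>Poly_Mapping.keys \<alpha>. fact (Poly_Mapping.lookup \<alpha> v))"

definition mi_deg :: "('v \<Rightarrow>\<^sub>0 nat) \<Rightarrow> nat" where
  "mi_deg \<alpha> = (\<Sum>v\<in>Poly_Mapping.keys \<alpha>. Poly_Mapping.lookup \<alpha> v)"

definition total_degree :: "'v mpoly \<Rightarrow> nat" where
  "total_degree P = Max (insert 0 (mi_deg ` Poly_Mapping.keys P))"

definition apolar_inner :: "'v mpoly \<Rightarrow> 'v mpoly \<Rightarrow> complex" where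
  "apolar_inner P Q =
     (\<Sum>\<alpha>\<in>Poly_Mapping.keys P \<union> Poly_Mapping.keys Q. of_nat (mi_fact \<alpha>) * Poly_Mapping.lookup P \<alpha> * cnj (Poly_Mapping.lookup Q \<alpha>))"

definition apolar_norm :: "'v mpoly \<Rightarrow> real" where
  "apolar_norm P = sqrt (Re (apolar_inner P P))"

end

theory Submission
  imports Defs "HOL-Library.Function_Algebras"
begin

text \<open>
  Write \<open>\<parallel>f\<parallel>\<^sup>2 = \<Sum>\<^sub>\<alpha> \<alpha>! \<bar>f \<alpha>\<bar>\<^sup>2\<close> for a coefficient function \<open>f\<close>. Expanding \<open>\<parallel>f g\<parallel>\<^sup>2\<close> and splitting
  every \<open>c!\<close> by Vandermonde's identity gives the Bombieri-type identity
  \<open>\<parallel>f g\<parallel>\<^sup>2 = \<Sum>\<^sub>\<alpha>\<^sub>,\<^sub>\<beta> \<bar>\<Sum>\<^sub>\<gamma> f(\<alpha>+\<gamma>) cnj(g(\<beta>+\<gamma>)) (\<alpha>+\<gamma>)! (\<beta>+\<gamma>)! / \<gamma>!\<bar>\<^sup>2 / (\<alpha>! \<beta>!)\<close>.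
  If \<open>f\<close> is homogeneous and \<open>f \<alpha> \<noteq> 0\<close>, only \<open>\<gamma> = 0\<close> contributes to the inner sum, so the
  \<open>(\<alpha>, \<beta>)\<close> summand is \<open>\<alpha>! \<bar>f \<alpha>\<bar>\<^sup>2 \<beta>! \<bar>g \<beta>\<bar>\<^sup>2\<close>; hence \<open>\<parallel>f g\<parallel>\<^sup>2 \<ge> \<parallel>f\<parallel>\<^sup>2 \<parallel>g\<parallel>\<^sup>2\<close> for homogeneous
  \<open>f\<close> and \<open>g\<close>. Homogenizing a polynomial of degree at most \<open>n\<close> with one extra variable
  multiplies the weight of the coefficient at \<open>\<alpha>\<close> by \<open>(n - |\<alpha>|)!\<close>, a factor between \<open>1\<close> and
  \<open>n!\<close>, and it commutes with products. So homogenizing the factors, applying the homogeneous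
  inequality and dehomogenizing the product loses at most the factor \<open>(n\<^sub>1 + \<dots> + n\<^sub>s)!\<close>.
\<close>

type_synonym 'w coeffs = "('w \<Rightarrow> nat) \<Rightarrow> complex"

type_synonym 'w exp_quadruple = "('w \<Rightarrow> nat) \<times> ('w \<Rightarrow> nat) \<times> ('w \<Rightarrow> nat) \<times> ('w \<Rightarrow> nat)"

definition exp_deg :: "('w::finite \<Rightarrow> nat) \<Rightarrow> nat" where
  "exp_deg a = (\<Sum>w\<in>UNIV. a w)"

definition exp_fact :: "('w::finite \<Rightarrow> nat) \<Rightarrow> real" where
  "exp_fact a = (\<Prod>w\<in>UNIV. fact (a w))"

lemma atMost_fun_eq_PiE: "{..c} = (\<Pi>\<^sub>E w\<in>UNIV. {..c w})"
  by (auto simp: PiE_UNIV_domain le_fun_def Pi_iff)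

lemma finite_atMost_fun [simp]: "finite {..c :: 'w::finite \<Rightarrow> nat}"
  unfolding atMost_fun_eq_PiE by (intro finite_PiE) auto

lemma exp_fact_pos: "exp_fact a > 0"
  unfolding exp_fact_def by (intro prod_pos) auto

lemma exp_fact_zero [simp]: "exp_fact 0 = 1"
  by (simp add: exp_fact_def)

lemma exp_deg_add: "exp_deg (a + b) = exp_deg a + exp_deg b"
  by (simp add: exp_deg_def sum.distrib)

lemma exp_deg_diff: "a \<le> c \<Longrightarrow> exp_deg (c - a) = exp_deg c - exp_deg a"
  unfolding exp_deg_def le_fun_def by (simp add: sum_subtractf_nat)

lemma exp_deg_mono: "a \<le> c \<Longrightarrow> exp_deg a \<le> exp_deg c"
  unfolding exp_deg_def le_fun_def by (intro sum_mono) auto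

lemma le_exp_deg: "a w \<le> exp_deg a"
  unfolding exp_deg_def by (rule member_le_sum) auto

lemma exp_deg_eq_0_iff [simp]: "exp_deg a = 0 \<longleftrightarrow> a = 0"
  by (auto simp: exp_deg_def fun_eq_iff)

definition vdm_weight :: "nat \<Rightarrow> nat \<Rightarrow> nat \<Rightarrow> nat \<Rightarrow> nat" where
  "vdm_weight c a a' k = (a choose k) * ((c - a) choose (a' - k)) * fact a' * fact (c - a')"

lemma sum_vdm_weight:
  assumes "a \<le> c" "a' \<le> c"
  shows "(\<Sum>k\<le>a'. vdm_weight c a a' k) = fact c"
proof -
  have "(\<Sum>k\<le>a'. vdm_weight c a a' k) = (c choose a') * fact a' * fact (c - a')"
    using vandermonde[of a "c - a" a'] assms
    by (simp add: vdm_weight_def sum_distrib_right[symmetric])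
  also have "\<dots> = fact c"
    using binomial_fact_lemma[OF assms(2)] by (simp add: mult_ac)
  finally show ?thesis .
qed

lemma vdm_weight_nonzero: "vdm_weight c a a' k \<noteq> 0 \<Longrightarrow> k \<le> a \<and> a' - k \<le> c - a"
  by (auto simp: vdm_weight_def binomial_eq_0_iff)

lemma vdm_weight_split:
  "vdm_weight (x + y + z + z') (x + z) (x + z') x * (fact x * fact y * fact z * fact z')
     = fact (x + z) * fact (y + z') * fact (x + z') * fact (y + z)"
proof -
  have "vdm_weight (x + y + z + z') (x + z) (x + z') x * (fact x * fact y * fact z * fact z')
     = (fact x * fact z * ((x + z) choose x)) * (fact z' * fact y * ((y + z') choose z'))
         * fact (x + z') * fact (y + z)"
    by (simp add: vdm_weight_def add_ac mult_ac)
  also have "\<dots> = fact (x + z) * fact (y + z') * fact (x + z') * fact (y + z)"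
    using binomial_fact_lemma[of x "x + z"] binomial_fact_lemma[of z' "y + z'"] by simp
  finally show ?thesis .
qed

definition exp_weight :: "('w::finite \<Rightarrow> nat) \<Rightarrow> ('w \<Rightarrow> nat) \<Rightarrow> ('w \<Rightarrow> nat) \<Rightarrow> ('w \<Rightarrow> nat) \<Rightarrow> real" where
  "exp_weight c a a' \<alpha> = (\<Prod>w\<in>UNIV. real (vdm_weight (c w) (a w) (a' w) (\<alpha> w)))"

lemma sum_exp_weight:
  assumes "a \<le> c" "a' \<le> c"
  shows "(\<Sum>\<alpha>\<in>{..a'}. exp_weight c a a' \<alpha>) = exp_fact c"
proof -
  have "(\<Sum>\<alpha>\<in>{..a'}. exp_weight c a a' \<alpha>) = (\<Prod>w\<in>UNIV. \<Sum>k\<le>a' w. real (vdm_weight (c w) (a w) (a' w) k))"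
    unfolding exp_weight_def atMost_fun_eq_PiE by (subst prod_sum_PiE) auto
  also have "\<dots> = exp_fact c"
    unfolding exp_fact_def of_nat_sum[symmetric] using assms
    by (intro prod.cong refl) (simp add: sum_vdm_weight le_fun_def del: of_nat_sum)
  finally show ?thesis .
qed

lemma exp_weight_nonzero:
  assumes "exp_weight c a a' \<alpha> \<noteq> 0"
  shows "\<alpha> \<le> a \<and> a' - \<alpha> \<le> c - a"
proof -
  have "vdm_weight (c w) (a w) (a' w) (\<alpha> w) \<noteq> 0" for w
    using assms unfolding exp_weight_def by (simp add: prod_zero_iff)
  then show ?thesis
    using vdm_weight_nonzero unfolding le_fun_def fun_diff_def by blast
qed

lemma exp_weight_split:
  "exp_weight (\<alpha> + \<beta> + \<gamma> + \<gamma>') (\<alpha> + \<gamma>) (\<alpha> + \<gamma>') \<alpha> * (exp_fact \<alpha> * exp_fact \<beta> * exp_fact \<gamma> * exp_fact \<gamma>')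
     = exp_fact (\<alpha> + \<gamma>) * exp_fact (\<beta> + \<gamma>') * exp_fact (\<alpha> + \<gamma>') * exp_fact (\<beta> + \<gamma>)"
proof -
  have "real (vdm_weight (\<alpha> w + \<beta> w + \<gamma> w + \<gamma>' w) (\<alpha> w + \<gamma> w) (\<alpha> w + \<gamma>' w) (\<alpha> w))
          * (fact (\<alpha> w) * fact (\<beta> w) * fact (\<gamma> w) * fact (\<gamma>' w))
        = fact (\<alpha> w + \<gamma> w) * fact (\<beta> w + \<gamma>' w) * fact (\<alpha> w + \<gamma>' w) * fact (\<beta> w + \<gamma> w)" for w
    using arg_cong[OF vdm_weight_split, of real] by (simp only: of_nat_mult of_nat_fact)
  then show ?thesis
    unfolding exp_weight_def exp_fact_def prod.distrib[symmetric] by simp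
qed

definition conv :: "'w::finite coeffs \<Rightarrow> 'w coeffs \<Rightarrow> ('w \<Rightarrow> nat) \<Rightarrow> complex" where
  "conv f g c = (\<Sum>a\<in>{..c}. f a * g (c - a))"

text \<open>The squared apolar norm of \<open>f\<close>, provided every exponent in the support of \<open>f\<close> has all
  entries at most \<open>K\<close>.\<close>

definition sqnorm :: "nat \<Rightarrow> 'w::finite coeffs \<Rightarrow> real" where
  "sqnorm K f = (\<Sum>a\<in>{..(\<lambda>_. K)}. exp_fact a * (cmod (f a))\<^sup>2)"

lemma apolar_term_nonneg: "0 \<le> exp_fact a * (cmod z)\<^sup>2"
  by (simp add: less_imp_le exp_fact_pos)

lemma sqnorm_nonneg: "sqnorm K f \<ge> 0"
  unfolding sqnorm_def by (intro sum_nonneg apolar_term_nonneg)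

definition expansion_term ::
    "'w::finite coeffs \<Rightarrow> 'w coeffs \<Rightarrow> ('w \<Rightarrow> nat) \<Rightarrow> ('w \<Rightarrow> nat) \<Rightarrow> ('w \<Rightarrow> nat) \<Rightarrow> ('w \<Rightarrow> nat) \<Rightarrow> complex" where
  "expansion_term f g c a a' \<alpha> =
     complex_of_real (exp_weight c a a' \<alpha>) * (f a * g (c - a) * cnj (f a') * cnj (g (c - a')))"

lemma sqnorm_conv_expand:
  "complex_of_real (sqnorm N (conv f g))
     = (\<Sum>c\<in>{..(\<lambda>_. N)}. \<Sum>a\<in>{..c}. \<Sum>a'\<in>{..c}. \<Sum>\<alpha>\<in>{..a'}. expansion_term f g c a a' \<alpha>)"
proof -
  have "complex_of_real (exp_fact c * (cmod (conv f g c))\<^sup>2)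
          = (\<Sum>a\<in>{..c}. \<Sum>a'\<in>{..c}. \<Sum>\<alpha>\<in>{..a'}. expansion_term f g c a a' \<alpha>)" for c
  proof -
    have "complex_of_real (exp_fact c * (cmod (conv f g c))\<^sup>2)
            = (\<Sum>a\<in>{..c}. \<Sum>a'\<in>{..c}. of_real (exp_fact c) * (f a * g (c - a) * cnj (f a') * cnj (g (c - a'))))"
      unfolding of_real_mult complex_norm_square conv_def cnj_sum sum_product
      by (simp add: sum_distrib_left mult_ac)
    also have "\<dots> = (\<Sum>a\<in>{..c}. \<Sum>a'\<in>{..c}. \<Sum>\<alpha>\<in>{..a'}. expansion_term f g c a a' \<alpha>)"
      unfolding expansion_term_def sum_distrib_right[symmetric] of_real_sum[symmetric]
      by (intro sum.cong refl) (simp add: sum_exp_weight)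
    finally show ?thesis .
  qed
  then show ?thesis
    unfolding sqnorm_def of_real_sum by simp
qed

definition bombieri_coeff ::
    "nat \<Rightarrow> 'w::finite coeffs \<Rightarrow> 'w coeffs \<Rightarrow> ('w \<Rightarrow> nat) \<Rightarrow> ('w \<Rightarrow> nat) \<Rightarrow> complex" where
  "bombieri_coeff K f g \<alpha> \<beta> = (\<Sum>\<gamma>\<in>{..(\<lambda>_. K)}.
     f (\<alpha> + \<gamma>) * cnj (g (\<beta> + \<gamma>)) * complex_of_real (exp_fact (\<alpha> + \<gamma>) * exp_fact (\<beta> + \<gamma>) / exp_fact \<gamma>))"

lemma bombieri_sum_expand:
  fixes K :: nat and f g :: "'w::finite coeffs"
  defines "B \<equiv> {..(\<lambda>_. K)}"
  shows "complex_of_real (\<Sum>\<alpha>\<in>B. \<Sum>\<beta>\<in>B. (cmod (bombieri_coeff K f g \<alpha> \<beta>))\<^sup>2 / (exp_fact \<alpha> * exp_fact \<beta>))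
     = (\<Sum>\<alpha>\<in>B. \<Sum>\<beta>\<in>B. \<Sum>\<gamma>\<in>B. \<Sum>\<gamma>'\<in>B.
          expansion_term f g (\<alpha> + \<beta> + \<gamma> + \<gamma>') (\<alpha> + \<gamma>) (\<alpha> + \<gamma>') \<alpha>)"
proof -
  have diff: "\<alpha> + \<beta> + \<gamma> + \<gamma>' - (\<alpha> + \<gamma>) = \<beta> + \<gamma>'" "\<alpha> + \<beta> + \<gamma> + \<gamma>' - (\<alpha> + \<gamma>') = \<beta> + \<gamma>"
    for \<alpha> \<beta> \<gamma> \<gamma>' :: "'w \<Rightarrow> nat"
    by (simp_all add: fun_eq_iff)
  have weight: "exp_weight (\<alpha> + \<beta> + \<gamma> + \<gamma>') (\<alpha> + \<gamma>) (\<alpha> + \<gamma>') \<alpha>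
      = 1 / (exp_fact \<alpha> * exp_fact \<beta>) * (exp_fact (\<alpha> + \<gamma>) * exp_fact (\<beta> + \<gamma>) / exp_fact \<gamma>)
          * (exp_fact (\<alpha> + \<gamma>') * exp_fact (\<beta> + \<gamma>') / exp_fact \<gamma>')" for \<alpha> \<beta> \<gamma> \<gamma>' :: "'w \<Rightarrow> nat"
    using exp_weight_split[of \<alpha> \<beta> \<gamma> \<gamma>'] exp_fact_pos[of \<alpha>] exp_fact_pos[of \<beta>]
      exp_fact_pos[of \<gamma>] exp_fact_pos[of \<gamma>']
    by (simp add: field_simps)
  show ?thesis
    unfolding of_real_sum of_real_divide complex_norm_square bombieri_coeff_def cnj_sum sum_product
      expansion_term_def diff weight B_def[symmetric]
    by (simp add: sum_distrib_left sum_divide_distrib mult_ac)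
qed

definition merge_exps :: "'w exp_quadruple \<Rightarrow> 'w exp_quadruple" where
  "merge_exps = (\<lambda>(\<alpha>, \<beta>, \<gamma>, \<gamma>'). (\<alpha> + \<beta> + \<gamma> + \<gamma>', \<alpha> + \<gamma>, \<alpha> + \<gamma>', \<alpha>))"

definition split_exps :: "'w exp_quadruple \<Rightarrow> 'w exp_quadruple" where
  "split_exps = (\<lambda>(c, a, a', \<alpha>). (\<alpha>, c + \<alpha> - a - a', a - \<alpha>, a' - \<alpha>))"

lemma split_merge_exps [simp]: "split_exps (merge_exps t) = t"
  by (cases t) (simp add: split_exps_def merge_exps_def fun_eq_iff)

lemma merge_split_exps:
  assumes "\<alpha> \<le> a" "a \<le> c" "\<alpha> \<le> a'" "a' - \<alpha> \<le> c - a"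
  shows "merge_exps (split_exps (c, a, a', \<alpha>)) = (c, a, a', \<alpha>)"
proof -
  have le: "\<alpha> w \<le> a w" "a w \<le> c w" "\<alpha> w \<le> a' w" "a' w - \<alpha> w \<le> c w - a w" for w
    using assms by (auto simp: le_fun_def)
  have "(\<alpha> + (c + \<alpha> - a - a') + (a - \<alpha>) + (a' - \<alpha>)) w = c w"
    "(\<alpha> + (a - \<alpha>)) w = a w" "(\<alpha> + (a' - \<alpha>)) w = a' w" for w
    using le[of w] by simp_all
  then have "\<alpha> + (c + \<alpha> - a - a') + (a - \<alpha>) + (a' - \<alpha>) = c" "\<alpha> + (a - \<alpha>) = a" "\<alpha> + (a' - \<alpha>) = a'"
    by (simp_all only: fun_eq_iff) blast+
  then show ?thesis
    by (simp only: split_exps_def merge_exps_def prod.case)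
qed

lemma expansion_term_nonzero:
  assumes "expansion_term f g c a a' \<alpha> \<noteq> 0"
  shows "f a \<noteq> 0" "g (c - a) \<noteq> 0" "f a' \<noteq> 0" "\<alpha> \<le> a" "a' - \<alpha> \<le> c - a"
  using assms exp_weight_nonzero[of c a a' \<alpha>] by (auto simp: expansion_term_def)

text \<open>The substitution \<open>(c, a, a', \<alpha>) = (\<alpha> + \<beta> + \<gamma> + \<gamma>', \<alpha> + \<gamma>, \<alpha> + \<gamma>', \<alpha>)\<close> matches the two
  sums: the Vandermonde weight vanishes on all quadruples outside its image.\<close>

lemma sum_expansion_reindex:
  fixes K :: nat and f g :: "'w::finite coeffs"
  defines "B \<equiv> {..(\<lambda>_. K)}"
  assumes supp_f: "\<And>a. f a \<noteq> 0 \<Longrightarrow> a \<in> B" and supp_g: "\<And>b. g b \<noteq> 0 \<Longrightarrow> b \<in> B"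
  shows "(\<Sum>c\<in>{..(\<lambda>_. 2 * K)}. \<Sum>a\<in>{..c}. \<Sum>a'\<in>{..c}. \<Sum>\<alpha>\<in>{..a'}. expansion_term f g c a a' \<alpha>)
     = (\<Sum>\<alpha>\<in>B. \<Sum>\<beta>\<in>B. \<Sum>\<gamma>\<in>B. \<Sum>\<gamma>'\<in>B. expansion_term f g (\<alpha> + \<beta> + \<gamma> + \<gamma>') (\<alpha> + \<gamma>) (\<alpha> + \<gamma>') \<alpha>)"
proof -
  let ?Z = "\<lambda>(c, a, a', \<alpha>). expansion_term f g c a a' \<alpha>"
  define S where "S = B \<times> B \<times> B \<times> B"
  define T where "T = (SIGMA c:{..(\<lambda>_. 2 * K) :: 'w \<Rightarrow> nat}. SIGMA a:{..c}. SIGMA a':{..c}. {..a'})"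
  have "sum (?Z \<circ> merge_exps) S = sum ?Z T"
  proof (rule sum.reindex_bij_witness_not_neutral
      [where S' = "{t \<in> S. ?Z (merge_exps t) = 0}" and T' = "{u \<in> T. ?Z u = 0}"
         and j = merge_exps and i = split_exps])
    show "merge_exps t \<in> T - {u \<in> T. ?Z u = 0}" if "t \<in> S - {t \<in> S. ?Z (merge_exps t) = 0}" for t
    proof -
      obtain \<alpha> \<beta> \<gamma> \<gamma>' where t: "t = (\<alpha>, \<beta>, \<gamma>, \<gamma>')" by (cases t)
      have nz: "expansion_term f g (\<alpha> + \<beta> + \<gamma> + \<gamma>') (\<alpha> + \<gamma>) (\<alpha> + \<gamma>') \<alpha> \<noteq> 0"
        using that by (simp add: t merge_exps_def)
      have "\<alpha> + \<beta> + \<gamma> + \<gamma>' - (\<alpha> + \<gamma>) = \<beta> + \<gamma>'" by (simp add: fun_eq_iff)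
      then have "\<alpha> + \<gamma> \<in> B" "\<beta> + \<gamma>' \<in> B"
        using expansion_term_nonzero[OF nz] supp_f supp_g by auto
      then have "\<alpha> w + \<gamma> w \<le> K" "\<beta> w + \<gamma>' w \<le> K" for w
        by (auto simp: B_def le_fun_def)
      then have "\<alpha> w + \<beta> w + \<gamma> w + \<gamma>' w \<le> 2 * K" for w
        by (metis add.commute add.left_commute add_mono mult_2)
      then show ?thesis
        using nz by (auto simp: t merge_exps_def T_def le_fun_def)
    qed
    show "split_exps u \<in> S - {t \<in> S. ?Z (merge_exps t) = 0}"
      and "merge_exps (split_exps u) = u" if "u \<in> T - {u \<in> T. ?Z u = 0}" for u
    proof -
      obtain c a a' \<alpha> where u: "u = (c, a, a', \<alpha>)" by (cases u)
      have nz: "expansion_term f g c a a' \<alpha> \<noteq> 0" and le: "a \<le> c" "a' \<le> c" "\<alpha> \<le> a'"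
        using that by (auto simp: u T_def)
      have "\<alpha> \<le> a" "a' - \<alpha> \<le> c - a"
        using expansion_term_nonzero[OF nz] by blast+
      with le show inv: "merge_exps (split_exps u) = u"
        unfolding u by (intro merge_split_exps)
      have "a \<in> B" "c - a \<in> B" "a' \<in> B"
        using expansion_term_nonzero[OF nz] supp_f supp_g by auto
      then have bnd: "a w \<le> K" "c w - a w \<le> K" "a' w \<le> K" "\<alpha> w \<le> a w" "\<alpha> w \<le> a' w" for w
        using \<open>\<alpha> \<le> a\<close> le by (auto simp: B_def le_fun_def)
      have "\<alpha> w \<le> K \<and> c w + \<alpha> w - a w - a' w \<le> K \<and> a w - \<alpha> w \<le> K \<and> a' w - \<alpha> w \<le> K" for w
        using bnd[of w] by arith
      then have "split_exps u \<in> S"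
        by (simp add: S_def B_def u split_exps_def le_fun_def)
      then show "split_exps u \<in> S - {t \<in> S. ?Z (merge_exps t) = 0}"
        using inv nz by (simp add: u)
    qed
  qed (auto simp: S_def T_def B_def)
  then show ?thesis
    unfolding S_def T_def by (simp add: sum.cartesian_product sum.Sigma merge_exps_def split_def)
qed

lemma bombieri_identity:
  fixes f g :: "'w::finite coeffs"
  assumes "\<And>a. f a \<noteq> 0 \<Longrightarrow> a \<in> {..(\<lambda>_. K)}" "\<And>b. g b \<noteq> 0 \<Longrightarrow> b \<in> {..(\<lambda>_. K)}"
  shows "sqnorm (2 * K) (conv f g) = (\<Sum>\<alpha>\<in>{..(\<lambda>_. K)}. \<Sum>\<beta>\<in>{..(\<lambda>_. K)}.
           (cmod (bombieri_coeff K f g \<alpha> \<beta>))\<^sup>2 / (exp_fact \<alpha> * exp_fact \<beta>))"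
    (is "?L = ?R")
proof -
  have "complex_of_real ?L = complex_of_real ?R"
    unfolding sqnorm_conv_expand bombieri_sum_expand by (rule sum_expansion_reindex[OF assms])
  then show ?thesis
    by (simp only: of_real_eq_iff)
qed

definition deg_le :: "nat \<Rightarrow> 'w::finite coeffs \<Rightarrow> bool" where
  "deg_le n f \<longleftrightarrow> (\<forall>a. f a \<noteq> 0 \<longrightarrow> exp_deg a \<le> n)"

definition homogeneous :: "nat \<Rightarrow> 'w::finite coeffs \<Rightarrow> bool" where
  "homogeneous n f \<longleftrightarrow> (\<forall>a. f a \<noteq> 0 \<longrightarrow> exp_deg a = n)"

lemma homogeneous_imp_deg_le: "homogeneous n f \<Longrightarrow> deg_le n f"
  by (simp add: homogeneous_def deg_le_def)

lemma deg_le_support: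
  assumes "deg_le n f" "n \<le> K" "f a \<noteq> 0"
  shows "a \<in> {..(\<lambda>_. K)}"
proof -
  have "a w \<le> K" for w
    using le_exp_deg[of a w] assms unfolding deg_le_def by (meson order_trans)
  then show ?thesis by (simp add: le_fun_def)
qed

lemma sqnorm_enlarge:
  assumes "deg_le n f" "n \<le> K"
  shows "sqnorm K f = sqnorm n f"
  unfolding sqnorm_def
proof (rule sum.mono_neutral_right)
  show "{..(\<lambda>_. n)} \<subseteq> {..(\<lambda>_. K)}"
    using assms(2) by (auto simp: le_fun_def)
  show "\<forall>a\<in>{..(\<lambda>_. K)} - {..(\<lambda>_. n)}. exp_fact a * (cmod (f a))\<^sup>2 = 0"
    using deg_le_support[OF assms(1) order_refl] by (metis DiffD2 mult_eq_0_iff norm_zero power_zero_numeral)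
qed simp

lemma conv_nonzeroE:
  assumes "conv f g c \<noteq> 0"
  obtains a where "a \<le> c" "f a \<noteq> 0" "g (c - a) \<noteq> 0"
proof -
  obtain a where "a \<in> {..c}" "f a * g (c - a) \<noteq> 0"
    using assms unfolding conv_def by (meson sum.not_neutral_contains_not_neutral)
  then show ?thesis
    using that by simp
qed

lemma deg_le_conv:
  assumes "deg_le n f" "deg_le m g"
  shows "deg_le (n + m) (conv f g)"
  unfolding deg_le_def
proof (intro allI impI)
  fix c assume "conv f g c \<noteq> 0"
  then obtain a where a: "a \<le> c" "f a \<noteq> 0" "g (c - a) \<noteq> 0"
    by (rule conv_nonzeroE)
  then have "exp_deg a \<le> n" "exp_deg (c - a) \<le> m"
    using assms unfolding deg_le_def by blast+
  moreover have "exp_deg (c - a) = exp_deg c - exp_deg a" "exp_deg a \<le> exp_deg c"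
    using exp_deg_diff[OF a(1)] exp_deg_mono[OF a(1)] by blast+
  ultimately show "exp_deg c \<le> n + m" by linarith
qed

lemma homogeneous_conv:
  assumes "homogeneous n f" "homogeneous m g"
  shows "homogeneous (n + m) (conv f g)"
  unfolding homogeneous_def
proof (intro allI impI)
  fix c assume "conv f g c \<noteq> 0"
  then obtain a where a: "a \<le> c" "f a \<noteq> 0" "g (c - a) \<noteq> 0"
    by (rule conv_nonzeroE)
  then have "exp_deg a = n" "exp_deg (c - a) = m"
    using assms unfolding homogeneous_def by blast+
  moreover have "exp_deg (c - a) = exp_deg c - exp_deg a" "exp_deg a \<le> exp_deg c"
    using exp_deg_diff[OF a(1)] exp_deg_mono[OF a(1)] by blast+
  ultimately show "exp_deg c = n + m" by linarith
qed

lemma bombieri_coeff_homogeneous: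
  assumes "homogeneous n f" "f \<alpha> \<noteq> 0"
  shows "bombieri_coeff K f g \<alpha> \<beta> = f \<alpha> * cnj (g \<beta>) * complex_of_real (exp_fact \<alpha> * exp_fact \<beta>)"
proof -
  have "f (\<alpha> + \<gamma>) = 0" if "\<gamma> \<noteq> 0" for \<gamma>
  proof -
    have "exp_deg (\<alpha> + \<gamma>) \<noteq> n"
      using assms that exp_deg_add[of \<alpha> \<gamma>] exp_deg_eq_0_iff[of \<gamma>] unfolding homogeneous_def by auto
    then show ?thesis
      using assms(1) unfolding homogeneous_def by blast
  qed
  then have "bombieri_coeff K f g \<alpha> \<beta> = (\<Sum>\<gamma>\<in>{0}.
      f (\<alpha> + \<gamma>) * cnj (g (\<beta> + \<gamma>)) * complex_of_real (exp_fact (\<alpha> + \<gamma>) * exp_fact (\<beta> + \<gamma>) / exp_fact \<gamma>))"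
    unfolding bombieri_coeff_def by (intro sum.mono_neutral_right) (auto simp: le_fun_def)
  then show ?thesis by simp
qed

lemma sqnorm_conv_ge_homogeneous:
  assumes f: "homogeneous n f" and g: "homogeneous m g"
  shows "sqnorm n f * sqnorm m g \<le> sqnorm (n + m) (conv f g)"
proof -
  define K where "K = n + m"
  have term_le: "(exp_fact \<alpha> * (cmod (f \<alpha>))\<^sup>2) * (exp_fact \<beta> * (cmod (g \<beta>))\<^sup>2)
          \<le> (cmod (bombieri_coeff K f g \<alpha> \<beta>))\<^sup>2 / (exp_fact \<alpha> * exp_fact \<beta>)" for \<alpha> \<beta>
  proof (cases "f \<alpha> = 0")
    case False
    have "\<bar>exp_fact \<alpha>\<bar> = exp_fact \<alpha>" "\<bar>exp_fact \<beta>\<bar> = exp_fact \<beta>"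
      using exp_fact_pos[of \<alpha>] exp_fact_pos[of \<beta>] by auto
    then show ?thesis
      using bombieri_coeff_homogeneous[OF f False] exp_fact_pos[of \<alpha>] exp_fact_pos[of \<beta>]
      by (simp add: norm_mult power_mult_distrib power2_eq_square field_simps)
  qed (simp add: less_imp_le exp_fact_pos)
  have supp: "f a \<noteq> 0 \<Longrightarrow> a \<in> {..(\<lambda>_. K)}" "g b \<noteq> 0 \<Longrightarrow> b \<in> {..(\<lambda>_. K)}" for a b
    using deg_le_support homogeneous_imp_deg_le f g unfolding K_def by (metis le_add1 le_add2)+
  have "sqnorm K f * sqnorm K g = (\<Sum>\<alpha>\<in>{..(\<lambda>_. K)}. \<Sum>\<beta>\<in>{..(\<lambda>_. K)}.
      (exp_fact \<alpha> * (cmod (f \<alpha>))\<^sup>2) * (exp_fact \<beta> * (cmod (g \<beta>))\<^sup>2))"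
    unfolding sqnorm_def sum_product ..
  also have "\<dots> \<le> (\<Sum>\<alpha>\<in>{..(\<lambda>_. K)}. \<Sum>\<beta>\<in>{..(\<lambda>_. K)}.
      (cmod (bombieri_coeff K f g \<alpha> \<beta>))\<^sup>2 / (exp_fact \<alpha> * exp_fact \<beta>))"
    by (intro sum_mono term_le)
  also have "\<dots> = sqnorm (2 * K) (conv f g)"
    by (rule bombieri_identity[OF supp, symmetric])
  finally have "sqnorm K f * sqnorm K g \<le> sqnorm (2 * K) (conv f g)" .
  moreover have "sqnorm K f = sqnorm n f" "sqnorm K g = sqnorm m g"
    "sqnorm (2 * K) (conv f g) = sqnorm (n + m) (conv f g)"
    using f g by (simp_all add: sqnorm_enlarge deg_le_conv homogeneous_imp_deg_le K_def)
  ultimately show ?thesis by simp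
qed

lemma exp_deg_option: "exp_deg (A :: 'v::finite option \<Rightarrow> nat) = A None + exp_deg (A \<circ> Some)"
  unfolding exp_deg_def UNIV_option_conv by (simp add: sum.reindex)

lemma exp_fact_option: "exp_fact (A :: 'v::finite option \<Rightarrow> nat) = fact (A None) * exp_fact (A \<circ> Some)"
  unfolding exp_fact_def UNIV_option_conv by (simp add: prod.reindex)

definition homog_exp :: "nat \<Rightarrow> ('v::finite \<Rightarrow> nat) \<Rightarrow> 'v option \<Rightarrow> nat" where
  "homog_exp n a = (\<lambda>x. case x of None \<Rightarrow> n - exp_deg a | Some v \<Rightarrow> a v)"

definition homogenize :: "nat \<Rightarrow> 'v::finite coeffs \<Rightarrow> 'v option coeffs" where
  "homogenize n f A = (if exp_deg A = n then f (A \<circ> Some) else 0)"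

lemma homog_exp_comp_Some [simp]: "homog_exp n a \<circ> Some = a"
  by (simp add: homog_exp_def fun_eq_iff)

lemma homog_exp_Some [simp]: "homog_exp n a (Some v) = a v"
  by (simp add: homog_exp_def)

lemma homog_exp_None [simp]: "homog_exp n a None = n - exp_deg a"
  by (simp add: homog_exp_def)

lemma exp_deg_homog_exp: "exp_deg a \<le> n \<Longrightarrow> exp_deg (homog_exp n a) = n"
  by (simp add: exp_deg_option)

lemma exp_fact_homog_exp: "exp_fact (homog_exp n a) = fact (n - exp_deg a) * exp_fact a"
  by (simp add: exp_fact_option)

lemma homog_exp_comp_Some_eq: "exp_deg A = n \<Longrightarrow> homog_exp n (A \<circ> Some) = A"
  by (auto simp: homog_exp_def exp_deg_option fun_eq_iff split: option.split)

lemma homogenize_homog_exp: "exp_deg a \<le> n \<Longrightarrow> homogenize n f (homog_exp n a) = f a"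
  by (simp add: homogenize_def exp_deg_homog_exp)

lemma homogeneous_homogenize: "homogeneous n (homogenize n f)"
  by (simp add: homogeneous_def homogenize_def)

lemma sqnorm_homogenize:
  assumes "deg_le n f"
  shows "sqnorm n (homogenize n f) = (\<Sum>a\<in>{..(\<lambda>_. n)}. fact (n - exp_deg a) * (exp_fact a * (cmod (f a))\<^sup>2))"
proof -
  have eq: "exp_fact (homog_exp n a) * (cmod (homogenize n f (homog_exp n a)))\<^sup>2
      = fact (n - exp_deg a) * (exp_fact a * (cmod (f a))\<^sup>2)" for a
  proof (cases "f a = 0")
    case True
    then show ?thesis by (simp add: homogenize_def)
  next
    case False
    then show ?thesis
      using assms by (simp add: deg_le_def homogenize_homog_exp exp_fact_homog_exp)
  qed
  show ?thesis
    unfolding sqnorm_def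
  proof (rule sum.reindex_bij_witness_not_neutral[symmetric,
        where S' = "{a \<in> {..(\<lambda>_. n)}. f a = 0}" and T' = "{A \<in> {..(\<lambda>_. n)}. homogenize n f A = 0}"
          and j = "homog_exp n" and i = "\<lambda>A. A \<circ> Some"])
    show "homog_exp n a \<in> {..(\<lambda>_. n)} - {A \<in> {..(\<lambda>_. n)}. homogenize n f A = 0}"
      if "a \<in> {..(\<lambda>_. n)} - {a \<in> {..(\<lambda>_. n)}. f a = 0}" for a
    proof -
      have "exp_deg a \<le> n" "f a \<noteq> 0"
        using that assms by (auto simp: deg_le_def)
      moreover have "homog_exp n a \<in> {..(\<lambda>_. n)}"
        using that by (auto simp: homog_exp_def le_fun_def split: option.split)
      ultimately show ?thesis
        by (simp add: homogenize_homog_exp)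
    qed
    show "A \<circ> Some \<in> {..(\<lambda>_. n)} - {a \<in> {..(\<lambda>_. n)}. f a = 0}"
      and "homog_exp n (A \<circ> Some) = A"
      if "A \<in> {..(\<lambda>_. n)} - {A \<in> {..(\<lambda>_. n)}. homogenize n f A = 0}" for A
      using that by (auto simp: homogenize_def le_fun_def homog_exp_comp_Some_eq split: if_splits)
  qed (use eq in \<open>auto intro: rev_finite_subset[OF finite_atMost_fun]\<close>)
qed

lemma sqnorm_le_sqnorm_homogenize:
  assumes "deg_le n f"
  shows "sqnorm n f \<le> sqnorm n (homogenize n f)"
  unfolding sqnorm_homogenize[OF assms] unfolding sqnorm_def
  by (intro sum_mono) (metis fact_ge_1 mult_1 mult_right_mono apolar_term_nonneg)

lemma sqnorm_homogenize_le:
  assumes "deg_le n f"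
  shows "sqnorm n (homogenize n f) \<le> fact n * sqnorm n f"
  unfolding sqnorm_homogenize[OF assms] unfolding sqnorm_def sum_distrib_left
  by (intro sum_mono mult_right_mono fact_mono apolar_term_nonneg) auto

lemma homog_exp_le:
  assumes "a \<le> c" "exp_deg a \<le> n" "exp_deg (c - a) \<le> m" "exp_deg C = n + m" "C \<circ> Some = c"
  shows "homog_exp n a \<le> C"
proof -
  have "exp_deg c = exp_deg a + exp_deg (c - a)"
    using exp_deg_diff[OF assms(1)] exp_deg_mono[OF assms(1)] by simp
  moreover have "C None + exp_deg c = n + m"
    using assms(4,5) exp_deg_option[of C] by simp
  ultimately have "n - exp_deg a \<le> C None"
    using assms(2,3) by linarith
  moreover have "a v \<le> C (Some v)" for v
    using assms(1,5) by (auto simp: le_fun_def)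
  ultimately show ?thesis
    by (auto simp: le_fun_def homog_exp_def split: option.split)
qed

lemma homogenize_mult_homog_exp:
  assumes f: "deg_le n f" and g: "deg_le m g" and C: "exp_deg C = n + m" and a: "a \<le> C \<circ> Some"
  shows "homogenize n f (homog_exp n a) * homogenize m g (C - homog_exp n a) = f a * g ((C \<circ> Some) - a)"
proof -
  have Some: "(C - homog_exp n a) \<circ> Some = (C \<circ> Some) - a"
    by (simp add: fun_eq_iff)
  show ?thesis
  proof (cases "f a = 0 \<or> g ((C \<circ> Some) - a) = 0")
    case True
    then show ?thesis
      by (auto simp: homogenize_def Some)
  next
    case False
    then have deg: "exp_deg a \<le> n" "exp_deg ((C \<circ> Some) - a) \<le> m"
      using f g by (auto simp: deg_le_def)
    have le: "homog_exp n a \<le> C"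
      by (rule homog_exp_le[OF a deg C refl])
    have n: "exp_deg (homog_exp n a) = n"
      by (rule exp_deg_homog_exp[OF deg(1)])
    have "exp_deg (C - homog_exp n a) = m"
      using exp_deg_diff[OF le] C n by simp
    then show ?thesis
      by (simp add: homogenize_def Some n)
  qed
qed

lemma conv_homogenize_apply:
  assumes f: "deg_le n f" and g: "deg_le m g" and C: "exp_deg C = n + m"
  shows "conv (homogenize n f) (homogenize m g) C = conv f g (C \<circ> Some)"
proof -
  define c where "c = C \<circ> Some"
  let ?h = "\<lambda>A. homogenize n f A * homogenize m g (C - A)"
  have summand: "?h (homog_exp n a) = f a * g (c - a)" if "a \<le> c" for a
    using homogenize_mult_homog_exp[OF f g C] that by (simp add: c_def)
  have "conv f g c = (\<Sum>A\<in>{..C}. ?h A)"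
    unfolding conv_def
  proof (rule sum.reindex_bij_witness_not_neutral
      [where S' = "{a \<in> {..c}. f a * g (c - a) = 0}" and T' = "{A \<in> {..C}. ?h A = 0}"
        and j = "homog_exp n" and i = "\<lambda>A. A \<circ> Some"])
    show "homog_exp n a \<in> {..C} - {A \<in> {..C}. ?h A = 0}"
      if "a \<in> {..c} - {a \<in> {..c}. f a * g (c - a) = 0}" for a
    proof -
      have "a \<le> c" "f a \<noteq> 0" "g (c - a) \<noteq> 0"
        using that by auto
      then have "exp_deg a \<le> n" "exp_deg (c - a) \<le> m"
        using f g by (auto simp: deg_le_def)
      then have "homog_exp n a \<le> C"
        using homog_exp_le[OF \<open>a \<le> c\<close> _ _ C c_def[symmetric]] by blast
      then show ?thesis
        using summand[OF \<open>a \<le> c\<close>] that by auto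
    qed
    show "A \<circ> Some \<in> {..c} - {a \<in> {..c}. f a * g (c - a) = 0}" and "homog_exp n (A \<circ> Some) = A"
      if "A \<in> {..C} - {A \<in> {..C}. ?h A = 0}" for A
    proof -
      have "exp_deg A = n" "A \<le> C"
        using that by (auto simp: homogenize_def split: if_splits)
      then have A: "homog_exp n (A \<circ> Some) = A" "A \<circ> Some \<le> c"
        unfolding c_def by (auto simp: homog_exp_comp_Some_eq le_fun_def)
      then show "homog_exp n (A \<circ> Some) = A" by blast
      show "A \<circ> Some \<in> {..c} - {a \<in> {..c}. f a * g (c - a) = 0}"
        using that summand[OF A(2)] A by auto
    qed
  next
    show "finite {a \<in> {..c}. f a * g (c - a) = 0}" "finite {A \<in> {..C}. ?h A = 0}"
      by (auto intro: rev_finite_subset[OF finite_atMost_fun])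
  next
    show "?h (homog_exp n a) = f a * g (c - a)" if "a \<in> {..c}" for a
      using that summand by simp
  qed simp_all
  then show ?thesis
    by (simp add: conv_def c_def)
qed

lemma conv_homogenize:
  assumes "deg_le n f" "deg_le m g"
  shows "conv (homogenize n f) (homogenize m g) = homogenize (n + m) (conv f g)"
proof
  fix C
  show "conv (homogenize n f) (homogenize m g) C = homogenize (n + m) (conv f g) C"
  proof (cases "exp_deg C = n + m")
    case True
    then show ?thesis
      by (simp add: conv_homogenize_apply[OF assms True] homogenize_def)
  next
    case False
    then show ?thesis
      using homogeneous_conv[OF homogeneous_homogenize[of n f] homogeneous_homogenize[of m g]]
      by (auto simp: homogeneous_def homogenize_def)
  qed
qed

definition conv_unit :: "('w::finite \<Rightarrow> nat) \<Rightarrow> complex" where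
  "conv_unit a = (if a = 0 then 1 else 0)"

primrec conv_prod :: "(nat \<Rightarrow> ('w::finite \<Rightarrow> nat) \<Rightarrow> complex) \<Rightarrow> nat \<Rightarrow> ('w \<Rightarrow> nat) \<Rightarrow> complex" where
  "conv_prod f 0 = conv_unit"
| "conv_prod f (Suc s) = conv (conv_prod f s) (f s)"

lemma homogeneous_conv_unit: "homogeneous 0 conv_unit"
  by (simp add: homogeneous_def conv_unit_def)

lemma sqnorm_conv_unit: "sqnorm 0 conv_unit = 1"
proof -
  have "{..(\<lambda>_. 0)} = {0 :: 'a \<Rightarrow> nat}"
    by (auto simp: le_fun_def fun_eq_iff)
  then show ?thesis
    by (simp add: sqnorm_def conv_unit_def)
qed

lemma homogenize_conv_unit: "homogenize 0 conv_unit = conv_unit"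
  by (auto simp: homogenize_def conv_unit_def fun_eq_iff)

lemma deg_le_conv_prod:
  assumes "\<And>i. i < s \<Longrightarrow> deg_le (n i) (f i)"
  shows "deg_le (\<Sum>i<s. n i) (conv_prod f s)"
  using assms
proof (induction s)
  case 0
  then show ?case
    by (simp add: deg_le_def conv_unit_def)
next
  case (Suc s)
  then show ?case
    by (simp add: deg_le_conv)
qed

lemma homogeneous_conv_prod:
  assumes "\<And>i. i < s \<Longrightarrow> homogeneous (n i) (f i)"
  shows "homogeneous (\<Sum>i<s. n i) (conv_prod f s)"
  using assms by (induction s) (auto simp: homogeneous_conv_unit intro: homogeneous_conv)

lemma homogenize_conv_prod:
  assumes "\<And>i. i < s \<Longrightarrow> deg_le (n i) (f i)"
  shows "homogenize (\<Sum>i<s. n i) (conv_prod f s) = conv_prod (\<lambda>i. homogenize (n i) (f i)) s"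
  using assms
proof (induction s)
  case (Suc s)
  then show ?case
    by (simp add: conv_homogenize[symmetric] deg_le_conv_prod)
qed (simp add: homogenize_conv_unit)

lemma sqnorm_conv_prod_ge_homogeneous:
  assumes "\<And>i. i < s \<Longrightarrow> homogeneous (n i) (f i)"
  shows "(\<Prod>i<s. sqnorm (n i) (f i)) \<le> sqnorm (\<Sum>i<s. n i) (conv_prod f s)"
  using assms
proof (induction s)
  case (Suc s)
  have "(\<Prod>i<Suc s. sqnorm (n i) (f i)) \<le> sqnorm (\<Sum>i<s. n i) (conv_prod f s) * sqnorm (n s) (f s)"
    using Suc by (auto intro: mult_right_mono sqnorm_nonneg)
  also have "\<dots> \<le> sqnorm (\<Sum>i<Suc s. n i) (conv_prod f (Suc s))"
    using Suc.prems by (simp add: sqnorm_conv_ge_homogeneous homogeneous_conv_prod)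
  finally show ?case .
qed (simp add: sqnorm_conv_unit)

theorem sqnorm_conv_prod_ge:
  assumes deg: "\<And>i. i < s \<Longrightarrow> deg_le (n i) (f i)"
  shows "(\<Prod>i<s. sqnorm (n i) (f i)) \<le> fact (\<Sum>i<s. n i) * sqnorm (\<Sum>i<s. n i) (conv_prod f s)"
proof -
  have "(\<Prod>i<s. sqnorm (n i) (f i)) \<le> (\<Prod>i<s. sqnorm (n i) (homogenize (n i) (f i)))"
    using deg by (intro prod_mono) (simp add: sqnorm_nonneg sqnorm_le_sqnorm_homogenize)
  also have "\<dots> \<le> sqnorm (\<Sum>i<s. n i) (conv_prod (\<lambda>i. homogenize (n i) (f i)) s)"
    by (rule sqnorm_conv_prod_ge_homogeneous) (rule homogeneous_homogenize)
  also have "\<dots> = sqnorm (\<Sum>i<s. n i) (homogenize (\<Sum>i<s. n i) (conv_prod f s))"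
    by (simp add: homogenize_conv_prod deg)
  also have "\<dots> \<le> fact (\<Sum>i<s. n i) * sqnorm (\<Sum>i<s. n i) (conv_prod f s)"
    by (intro sqnorm_homogenize_le deg_le_conv_prod deg)
  finally show ?thesis .
qed

lemma lookup_Abs_poly_mapping_finite [simp]:
  "Poly_Mapping.lookup (Abs_poly_mapping (a :: 'v::finite \<Rightarrow> 'b::zero)) = a"
  by (simp add: lookup_Abs_poly_mapping)

lemma bij_Abs_poly_mapping_finite: "bij (Abs_poly_mapping :: ('v::finite \<Rightarrow> 'b::zero) \<Rightarrow> _)"
  by (rule o_bij[where g = Poly_Mapping.lookup]) (auto simp: fun_eq_iff lookup_inverse)

definition coeff_fun :: "'v::finite mpoly \<Rightarrow> 'v coeffs" where
  "coeff_fun P a = Poly_Mapping.lookup P (Abs_poly_mapping a)"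

lemma coeff_fun_mult:
  fixes P Q :: "'v::finite mpoly"
  shows "coeff_fun (P * Q) = conv (coeff_fun P) (coeff_fun Q)"
proof
  fix c :: "'v \<Rightarrow> nat"
  have add_iff: "Abs_poly_mapping c = Abs_poly_mapping a + Abs_poly_mapping b \<longleftrightarrow> c = a + b"
    for a b :: "'v \<Rightarrow> nat"
    by (simp add: poly_mapping_eq_iff fun_eq_iff lookup_add)
  have inner: "(\<Sum>b. coeff_fun Q b when c = a + b) = (if a \<le> c then coeff_fun Q (c - a) else 0)" for a
  proof -
    have "c = a + b \<longleftrightarrow> a \<le> c \<and> b = c - a" for b
      by (auto simp: fun_eq_iff le_fun_def)
    then have eq: "(\<lambda>b. coeff_fun Q b when c = a + b)
        = (\<lambda>b. (if a \<le> c then coeff_fun Q b else 0) when b = c - a)"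
      by (auto simp: fun_eq_iff when_def)
    show ?thesis
      unfolding eq by (rule Sum_any_when_equal)
  qed
  have "coeff_fun (P * Q) c
      = (\<Sum>l. Poly_Mapping.lookup P l * (\<Sum>q. Poly_Mapping.lookup Q q when Abs_poly_mapping c = l + q))"
    by (simp add: coeff_fun_def lookup_mult)
  also have "\<dots> = (\<Sum>a. coeff_fun P a * (\<Sum>b. coeff_fun Q b when c = a + b))"
  proof (rule Sum_any.reindex_cong[OF bij_Abs_poly_mapping_finite])
    have "(\<Sum>q. Poly_Mapping.lookup Q q when Abs_poly_mapping c = Abs_poly_mapping a + q)
        = (\<Sum>b. coeff_fun Q b when c = a + b)" for a
      by (rule Sum_any.reindex_cong[OF bij_Abs_poly_mapping_finite])
        (simp add: fun_eq_iff coeff_fun_def add_iff)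
    then show "(\<lambda>l. Poly_Mapping.lookup P l * (\<Sum>q. Poly_Mapping.lookup Q q when Abs_poly_mapping c = l + q))
          \<circ> Abs_poly_mapping
        = (\<lambda>a. coeff_fun P a * (\<Sum>b. coeff_fun Q b when c = a + b))"
      by (simp add: fun_eq_iff coeff_fun_def)
  qed
  also have "\<dots> = (\<Sum>a\<in>{..c}. coeff_fun P a * coeff_fun Q (c - a))"
    unfolding inner by (subst Sum_any.expand_superset[of "{..c}"]) (auto intro: sum.cong)
  finally show "coeff_fun (P * Q) c = conv (coeff_fun P) (coeff_fun Q) c"
    by (simp add: conv_def)
qed

lemma coeff_fun_one: "coeff_fun 1 = conv_unit"
proof
  fix a :: "'a \<Rightarrow> nat"
  have "Abs_poly_mapping a = 0 \<longleftrightarrow> a = 0"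
    by (simp add: poly_mapping_eq_iff fun_eq_iff)
  then show "coeff_fun 1 a = conv_unit a"
    by (simp add: coeff_fun_def conv_unit_def lookup_one when_def)
qed

lemma coeff_fun_prod: "coeff_fun (\<Prod>i<s. P i) = conv_prod (\<lambda>i. coeff_fun (P i)) s"
  by (induction s) (simp_all add: coeff_fun_one coeff_fun_mult)

lemma keys_Abs_poly_mapping_finite:
  "Poly_Mapping.keys (Abs_poly_mapping (a :: 'v::finite \<Rightarrow> nat)) = {v. a v \<noteq> 0}"
  by (simp add: keys_def)

lemma mi_fact_Abs_poly_mapping: "real (mi_fact (Abs_poly_mapping a)) = exp_fact a"
  unfolding mi_fact_def exp_fact_def keys_Abs_poly_mapping_finite lookup_Abs_poly_mapping_finite
    of_nat_prod of_nat_fact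
  by (rule prod.mono_neutral_left) auto

lemma mi_deg_Abs_poly_mapping: "mi_deg (Abs_poly_mapping a) = exp_deg a"
  unfolding mi_deg_def exp_deg_def keys_Abs_poly_mapping_finite lookup_Abs_poly_mapping_finite
  by (rule sum.mono_neutral_left) auto

lemma deg_le_coeff_fun: "deg_le (total_degree P) (coeff_fun P)"
  unfolding deg_le_def
proof (intro allI impI)
  fix a assume "coeff_fun P a \<noteq> 0"
  then have "Abs_poly_mapping a \<in> Poly_Mapping.keys P"
    by (simp add: coeff_fun_def in_keys_iff)
  then have "mi_deg (Abs_poly_mapping a) \<le> total_degree P"
    unfolding total_degree_def by (intro Max_ge) auto
  then show "exp_deg a \<le> total_degree P"
    by (simp add: mi_deg_Abs_poly_mapping)
qed

lemma apolar_norm_sq_eq_sqnorm: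
  assumes "deg_le n (coeff_fun P)"
  shows "(apolar_norm P)\<^sup>2 = sqnorm n (coeff_fun P)"
proof -
  have keys: "Poly_Mapping.keys P = Abs_poly_mapping ` {a. coeff_fun P a \<noteq> 0}"
  proof (intro equalityI subsetI)
    fix k assume "k \<in> Poly_Mapping.keys P"
    then show "k \<in> Abs_poly_mapping ` {a. coeff_fun P a \<noteq> 0}"
      using image_eqI[of k Abs_poly_mapping "Poly_Mapping.lookup k"]
      by (simp add: coeff_fun_def in_keys_iff)
  qed (auto simp: coeff_fun_def in_keys_iff)
  have "apolar_inner P P
      = (\<Sum>k\<in>Poly_Mapping.keys P. complex_of_real (real (mi_fact k) * (cmod (Poly_Mapping.lookup P k))\<^sup>2))"
    unfolding apolar_inner_def Un_absorb
    by (intro sum.cong refl) (simp only: of_real_mult complex_norm_square of_real_of_nat_eq mult.assoc)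
  also have "\<dots> = (\<Sum>a | coeff_fun P a \<noteq> 0. complex_of_real (exp_fact a * (cmod (coeff_fun P a))\<^sup>2))"
    unfolding keys by (subst sum.reindex)
      (auto simp: coeff_fun_def mi_fact_Abs_poly_mapping[symmetric]
        intro: inj_on_subset[OF bij_is_inj[OF bij_Abs_poly_mapping_finite]])
  also have "\<dots> = complex_of_real (sqnorm n (coeff_fun P))"
    unfolding sqnorm_def of_real_sum
    by (rule sum.mono_neutral_left) (use deg_le_support[OF assms order_refl] in auto)
  finally show ?thesis
    unfolding apolar_norm_def using sqnorm_nonneg by simp
qed

theorem theorem3p1:
  fixes P :: "nat \<Rightarrow> ('v::finite) mpoly" and n :: "nat \<Rightarrow> nat" and s :: nat
  assumes "s \<ge> 1"
    and "\<And>i. i < s \<Longrightarrow> P i \<noteq> 0"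
    and "\<And>i. i < s \<Longrightarrow> total_degree (P i) = n i"
  shows "fact (\<Sum>i<s. n i) * (apolar_norm (\<Prod>i<s. P i))\<^sup>2
           \<ge> (\<Prod>i<s. (apolar_norm (P i))\<^sup>2)"
proof -
  define f where "f = (\<lambda>i. coeff_fun (P i))"
  have deg: "deg_le (n i) (f i)" if "i < s" for i
    using deg_le_coeff_fun[of "P i"] assms(3)[OF that] by (simp add: f_def)
  have prod: "(apolar_norm (\<Prod>i<s. P i))\<^sup>2 = sqnorm (\<Sum>i<s. n i) (conv_prod f s)"
    using apolar_norm_sq_eq_sqnorm[of "\<Sum>i<s. n i" "\<Prod>i<s. P i"] deg_le_conv_prod[of s n f] deg
    by (simp add: coeff_fun_prod f_def)
  have "(\<Prod>i<s. (apolar_norm (P i))\<^sup>2) = (\<Prod>i<s. sqnorm (n i) (f i))"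
    using deg by (intro prod.cong) (simp_all add: apolar_norm_sq_eq_sqnorm f_def)
  also have "\<dots> \<le> fact (\<Sum>i<s. n i) * sqnorm (\<Sum>i<s. n i) (conv_prod f s)"
    using deg by (rule sqnorm_conv_prod_ge)
  finally show ?thesis
    by (simp add: prod)
qed

end
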